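(* Let $n,p$ be positive integers, $X\in\mathbb{R}^{n\times p}$, $\mathbf y\in\mathbb{R}^n$ and $\delta>0$. For any $j\in\{1,\dots,p\}$, if the coordinates $t_i$, $i\neq j$, of $\mathbf t\in[0,1)^p$ are held fixed, then \[ \lim_{t_j\downarrow 0}\boldsymbol\zeta_{\mathbf t}(j)=0, \] where $\boldsymbol\zeta_{\mathbf t}(j)$ denotes the $j$-th component of $\boldsymbol\zeta_{\mathbf t}$.
   Context: For $\mathbf t\in[0,1)^p$, $T_{\mathbf t}=\mathrm{Diag}(t_1,\dots,t_p)$, $X_{\mathbf t}=XT_{\mathbf t}$, $L_{\mathbf t}=\frac1n[X_{\mathbf t}^\top X_{\mathbf t}+\delta(I-T_{\mathbf t}^2)]$ (invertible for such $\mathbf t$) with $I$ the $p\times p$ identity, $\widetilde{\boldsymbol\beta}_{\mathbf t}=L_{\mathbf t}^{-1}(X_{\mathbf t}^\top\mathbf y/n)$, and $\odot$ denotes the element-wise product. Define $\mathbf a_{\mathbf t}=\frac{X^\top X}{n}(\mathbf t\odot\widetilde{\boldsymbol\beta}_{\mathbf t})-\frac{X^\top\mathbf y}{n}$, $\mathbf b_{\mathbf t}=\mathbf a_{\mathbf t}-\frac{\delta}{n}(\mathbf t\odot\widetilde{\boldsymbol\beta}_{\mathbf t})$, $\mathbf c_{\mathbf t}=L_{\mathbf t}^{-1}(\mathbf t\odot\mathbf a_{\mathbf t})$, $\mathbf d_{\mathbf t}=\left(\frac{X^\top X}{n}-\frac{\delta}{n}I\right)(\mathbf t\odot\mathbf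 c_{\mathbf t})$, and $\boldsymbol\zeta_{\mathbf t}=2(\widetilde{\boldsymbol\beta}_{\mathbf t}\odot(\mathbf a_{\mathbf t}-\mathbf d_{\mathbf t}))-2(\mathbf b_{\mathbf t}\odot\mathbf c_{\mathbf t})$. *)

theory Defs
  imports "HOL-Analysis.Analysis"
begin

text \<open>Design matrix X is n x p (rows indexed by 'n, columns by 'p); n = CARD('n), p = CARD('p).\<close>

definition ewprod :: "real^'p \<Rightarrow> real^'p \<Rightarrow> real^'p" (infixl "\<odot>" 70) where
  "u \<odot> v = (\<chi> i. u$i * v$i)"

definition Tmat :: "real^'p \<Rightarrow> real^'p^'p" where
  "Tmat t = (\<chi> i k. if i = k then t$i else 0)"

definition Xt :: "real^'p^'n \<Rightarrow> real^'p \<Rightarrow> real^'p^'n" where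
  "Xt X t = X ** Tmat t"

definition Lmat :: "real^'p^'n \<Rightarrow> real \<Rightarrow> real^'p \<Rightarrow> real^'p^'p" where
  "Lmat X \<delta> t = (1 / real CARD('n)) *\<^sub>R
     (transpose (Xt X t) ** Xt X t + \<delta> *\<^sub>R (mat 1 - Tmat t ** Tmat t))"

definition beta_t :: "real^'p^'n \<Rightarrow> real^'n \<Rightarrow> real \<Rightarrow> real^'p \<Rightarrow> real^'p" where
  "beta_t X y \<delta> t = matrix_inv (Lmat X \<delta> t) *v
     ((1 / real CARD('n)) *\<^sub>R (transpose (Xt X t) *v y))"

definition a_t :: "real^'p^'n \<Rightarrow> real^'n \<Rightarrow> real \<Rightarrow> real^'p \<Rightarrow> real^'p" where
  "a_t X y \<delta> t = ((1 / real CARD('n)) *\<^sub>R (transpose X ** X)) *v (t \<odot> beta_t X y \<delta> t)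
     - (1 / real CARD('n)) *\<^sub>R (transpose X *v y)"

definition b_t :: "real^'p^'n \<Rightarrow> real^'n \<Rightarrow> real \<Rightarrow> real^'p \<Rightarrow> real^'p" where
  "b_t X y \<delta> t = a_t X y \<delta> t - (\<delta> / real CARD('n)) *\<^sub>R (t \<odot> beta_t X y \<delta> t)"

definition c_t :: "real^'p^'n \<Rightarrow> real^'n \<Rightarrow> real \<Rightarrow> real^'p \<Rightarrow> real^'p" where
  "c_t X y \<delta> t = matrix_inv (Lmat X \<delta> t) *v (t \<odot> a_t X y \<delta> t)"

definition d_t :: "real^'p^'n \<Rightarrow> real^'n \<Rightarrow> real \<Rightarrow> real^'p \<Rightarrow> real^'p" where
  "d_t X y \<delta> t = ((1 / real CARD('n)) *\<^sub>R (transpose X ** X) - (\<delta> / real CARD('n)) *\<^sub>R mat 1)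
     *v (t \<odot> c_t X y \<delta> t)"

definition zeta_t :: "real^'p^'n \<Rightarrow> real^'n \<Rightarrow> real \<Rightarrow> real^'p \<Rightarrow> real^'p" where
  "zeta_t X y \<delta> t = 2 *\<^sub>R (beta_t X y \<delta> t \<odot> (a_t X y \<delta> t - d_t X y \<delta> t))
     - 2 *\<^sub>R (b_t X y \<delta> t \<odot> c_t X y \<delta> t)"

end

theory Submission
  imports Defs
begin

text \<open>
  At \<open>t\<^sub>j = 0\<close> the \<open>j\<close>-th row of \<open>L\<^sub>t\<close> is \<open>(\<delta>/n) e\<^sub>j\<close>, while the \<open>j\<close>-th entries of
  \<open>X\<^sub>t\<^sup>T y\<close> and of \<open>t \<odot> a\<^sub>t\<close> vanish; hence \<open>\<beta>\<^sub>t(j) = c\<^sub>t(j) = 0\<close> and so \<open>\<zeta>\<^sub>t(j) = 0\<close>.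
  For \<open>\<delta> > 0\<close> and \<open>|t\<^sub>i| < 1\<close> the matrix \<open>L\<^sub>t\<close> is positive definite, so by Cramer's rule
  \<open>\<zeta>\<^sub>t\<close> is continuous there, and the one-sided limit \<open>t\<^sub>j \<down> 0\<close> is the value at \<open>t\<^sub>j = 0\<close>.
\<close>

lemma tendsto_matrix_matrix_mult:
  fixes A :: "'a \<Rightarrow> 'r::real_normed_field^'m^'n" and B :: "'a \<Rightarrow> 'r^'k^'m"
  assumes "(A \<longlongrightarrow> A0) F" "(B \<longlongrightarrow> B0) F"
  shows "((\<lambda>s. A s ** B s) \<longlongrightarrow> A0 ** B0) F"
  unfolding matrix_matrix_mult_def
  by (intro vec_tendstoI) (simp, intro tendsto_intros assms)

lemma tendsto_matrix_vector_mult: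
  fixes A :: "'a \<Rightarrow> 'r::real_normed_field^'m^'n" and x :: "'a \<Rightarrow> 'r^'m"
  assumes "(A \<longlongrightarrow> A0) F" "(x \<longlongrightarrow> x0) F"
  shows "((\<lambda>s. A s *v x s) \<longlongrightarrow> A0 *v x0) F"
  unfolding matrix_vector_mult_def
  by (intro vec_tendstoI) (simp, intro tendsto_intros assms)

lemma tendsto_transpose:
  fixes A :: "'a \<Rightarrow> 'r::real_normed_field^'m^'n"
  assumes "(A \<longlongrightarrow> A0) F"
  shows "((\<lambda>s. transpose (A s)) \<longlongrightarrow> transpose A0) F"
  unfolding transpose_def
  by (intro vec_tendstoI) (simp, intro tendsto_intros assms)

lemma tendsto_det:
  fixes A :: "'a \<Rightarrow> 'r::real_normed_field^'m^'m"
  assumes "(A \<longlongrightarrow> A0) F"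
  shows "((\<lambda>s. det (A s)) \<longlongrightarrow> det A0) F"
  unfolding det_def
  by (intro tendsto_intros assms)

lemma matrix_inv_right:
  fixes M :: "'r::semiring_1^'m^'m"
  assumes "invertible M"
  shows "M ** matrix_inv M = mat 1"
  using assms unfolding invertible_def matrix_inv_def by (metis (mono_tags, lifting) someI_ex)

lemma matrix_inv_mult_cramer:
  fixes M :: "'r::field^'m^'m"
  assumes "det M \<noteq> 0"
  shows "matrix_inv M *v b = (\<chi> k. det (\<chi> i j. if j = k then b$i else M$i$j) / det M)"
proof -
  have "M *v (matrix_inv M *v b) = b"
    using assms by (simp add: matrix_vector_mul_assoc matrix_inv_right invertible_det_nz)
  then show ?thesis
    using cramer[OF assms] by blast
qed

lemma tendsto_matrix_inv_mult:
  fixes M :: "'a \<Rightarrow> 'r::real_normed_field^'m^'m" and b :: "'a \<Rightarrow> 'r^'m"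
  assumes "(M \<longlongrightarrow> M0) F" "(b \<longlongrightarrow> b0) F" "invertible M0"
  shows "((\<lambda>s. matrix_inv (M s) *v b s) \<longlongrightarrow> matrix_inv M0 *v b0) F"
proof -
  have det0: "det M0 \<noteq> 0"
    using assms(3) invertible_det_nz by blast
  have "eventually (\<lambda>s. det (M s) \<noteq> 0) F"
    by (rule tendsto_imp_eventually_ne[OF tendsto_det[OF assms(1)] det0])
  then have cramer_eventually: "eventually (\<lambda>s. matrix_inv (M s) *v b s =
      (\<chi> k. det (\<chi> i j. if j = k then b s$i else M s$i$j) / det (M s))) F"
    by (rule eventually_mono) (simp add: matrix_inv_mult_cramer)
  have entries: "((\<lambda>s. \<chi> i j. if j = k then b s$i else M s$i$j) \<longlongrightarrow>
      (\<chi> i j. if j = k then b0$i else M0$i$j)) F" for k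
    by (intro vec_tendstoI) (simp add: tendsto_vec_nth assms)
  have "((\<lambda>s. \<chi> k. det (\<chi> i j. if j = k then b s$i else M s$i$j) / det (M s)) \<longlongrightarrow>
      (\<chi> k. det (\<chi> i j. if j = k then b0$i else M0$i$j) / det M0)) F"
    using entries by (intro vec_tendstoI) (simp add: tendsto_divide tendsto_det assms(1) det0)
  then show ?thesis
    using cramer_eventually by (simp add: tendsto_cong matrix_inv_mult_cramer[OF det0])
qed

lemma matrix_inv_mult_nth_of_row_axis:
  fixes M :: "'r::field^'m^'m"
  assumes "invertible M" "M $ j = c *s axis j 1" "c \<noteq> 0"
  shows "(matrix_inv M *v v) $ j = v $ j / c"
proof -
  have row_j: "(M *v w) $ j = c * w $ j" for w
    using assms(2) by (simp add: matrix_vector_mult_def axis_def mult.assoc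
        if_distrib[of "\<lambda>z. z * _"] if_distrib[of "\<lambda>z. _ * z"] cong: if_cong)
  have "v $ j = (M *v (matrix_inv M *v v)) $ j"
    using assms(1) by (simp add: matrix_vector_mul_assoc matrix_inv_right)
  also have "\<dots> = c * (matrix_inv M *v v) $ j"
    by (rule row_j)
  finally show ?thesis
    using assms(3) by (simp add: field_simps)
qed

lemma invertible_if_inner_pos:
  fixes M :: "real^'m^'m"
  assumes "\<And>x. x \<noteq> 0 \<Longrightarrow> 0 < x \<bullet> (M *v x)"
  shows "invertible M"
proof -
  have "\<forall>x. M *v x = 0 \<longrightarrow> x = 0"
    using assms by force
  then obtain B where "B ** M = mat 1"
    using matrix_left_invertible_ker by blast
  then show ?thesis
    using invertible_left_inverse by blast
qed

lemma tendsto_ewprod: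
  fixes u v :: "'a \<Rightarrow> real^'m"
  assumes "(u \<longlongrightarrow> u0) F" "(v \<longlongrightarrow> v0) F"
  shows "((\<lambda>s. u s \<odot> v s) \<longlongrightarrow> u0 \<odot> v0) F"
  unfolding ewprod_def
  by (intro vec_tendstoI) (simp, intro tendsto_intros assms)

lemma tendsto_Tmat:
  fixes t :: "'a \<Rightarrow> real^'m"
  assumes "(t \<longlongrightarrow> t0) F"
  shows "((\<lambda>s. Tmat (t s)) \<longlongrightarrow> Tmat t0) F"
  unfolding Tmat_def
  by (intro vec_tendstoI) (auto intro: tendsto_vec_nth[OF assms])

lemma Tmat_mult_vector: "Tmat t *v x = t \<odot> x"
  by (simp add: vec_eq_iff matrix_vector_mult_def Tmat_def ewprod_def
      if_distrib[of "\<lambda>z. z * _"] cong: if_cong)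

lemma Xt_nth: "Xt X t $ i $ k = X$i$k * t$k"
  by (simp add: Xt_def matrix_matrix_mult_def Tmat_def if_distrib[of "\<lambda>z. _ * z"] cong: if_cong)

lemma inner_Lmat_mult:
  fixes X :: "real^'p^'n"
  shows "x \<bullet> (Lmat X \<delta> t *v x) =
    ((Xt X t *v x) \<bullet> (Xt X t *v x) + \<delta> * (\<Sum>i\<in>UNIV. (1 - (t$i)^2) * (x$i)^2)) / real CARD('n)"
proof -
  let ?M = "Xt X t"
  have "Lmat X \<delta> t *v x = (1 / real CARD('n)) *\<^sub>R
      (transpose ?M *v (?M *v x) + \<delta> *\<^sub>R (x - t \<odot> (t \<odot> x)))"
    unfolding Lmat_def
    by (simp add: scaleR_matrix_vector_assoc[symmetric] matrix_vector_mult_add_rdistrib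
        matrix_vector_mult_diff_rdistrib matrix_vector_mul_assoc[symmetric] Tmat_mult_vector
        del: transpose_matrix_vector)
  then have "x \<bullet> (Lmat X \<delta> t *v x) =
      (x \<bullet> (transpose ?M *v (?M *v x)) + \<delta> * (x \<bullet> (x - t \<odot> (t \<odot> x)))) / real CARD('n)"
    by (simp add: inner_add_right del: transpose_matrix_vector)
  also have "x \<bullet> (transpose ?M *v (?M *v x)) = (?M *v x) \<bullet> (?M *v x)"
    by (metis dot_lmul_matrix inner_commute transpose_matrix_vector)
  also have "x \<bullet> (x - t \<odot> (t \<odot> x)) = (\<Sum>i\<in>UNIV. (1 - (t$i)^2) * (x$i)^2)"
    by (simp add: inner_vec_def ewprod_def power2_eq_square algebra_simps sum_subtractf)
  finally show ?thesis .
qed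

lemma invertible_Lmat:
  fixes X :: "real^'p^'n"
  assumes "\<delta> > 0" "\<And>i. \<bar>t$i\<bar> < 1"
  shows "invertible (Lmat X \<delta> t)"
proof (rule invertible_if_inner_pos)
  fix x :: "real^'p"
  assume "x \<noteq> 0"
  then obtain k where "x$k \<noteq> 0"
    by (auto simp: vec_eq_iff)
  have weight_pos: "0 < 1 - (t$i)^2" for i
    using assms(2)[of i] by (simp add: abs_square_less_1)
  then have "0 \<le> (1 - (t$i)^2) * (x$i)^2" for i
    by (simp add: less_imp_le)
  then have "0 < (\<Sum>i\<in>UNIV. (1 - (t$i)^2) * (x$i)^2)"
    using \<open>x$k \<noteq> 0\<close> weight_pos by (intro sum_pos2[of _ k]) auto
  then show "0 < x \<bullet> (Lmat X \<delta> t *v x)"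
    unfolding inner_Lmat_mult using assms(1) by (simp add: add_nonneg_pos)
qed

lemma tendsto_zeta_t:
  fixes X :: "real^'p^'n" and \<tau> :: "'a \<Rightarrow> real^'p"
  assumes tau: "(\<tau> \<longlongrightarrow> t0) F" and inv: "invertible (Lmat X \<delta> t0)"
  shows "((\<lambda>s. zeta_t X y \<delta> (\<tau> s)) \<longlongrightarrow> zeta_t X y \<delta> t0) F"
proof -
  have Xt: "((\<lambda>s. Xt X (\<tau> s)) \<longlongrightarrow> Xt X t0) F"
    unfolding Xt_def by (intro tendsto_matrix_matrix_mult tendsto_Tmat tau tendsto_const)
  have L: "((\<lambda>s. Lmat X \<delta> (\<tau> s)) \<longlongrightarrow> Lmat X \<delta> t0) F"
    unfolding Lmat_def
    by (intro tendsto_scaleR tendsto_add tendsto_diff tendsto_matrix_matrix_mult tendsto_transpose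
        Xt tendsto_Tmat tau tendsto_const)
  have beta: "((\<lambda>s. beta_t X y \<delta> (\<tau> s)) \<longlongrightarrow> beta_t X y \<delta> t0) F"
    unfolding beta_t_def
    by (intro tendsto_matrix_inv_mult L inv tendsto_scaleR tendsto_matrix_vector_mult
        tendsto_transpose Xt tendsto_const)
  have a: "((\<lambda>s. a_t X y \<delta> (\<tau> s)) \<longlongrightarrow> a_t X y \<delta> t0) F"
    unfolding a_t_def
    by (intro tendsto_diff tendsto_matrix_vector_mult tendsto_ewprod beta tau tendsto_const)
  have b: "((\<lambda>s. b_t X y \<delta> (\<tau> s)) \<longlongrightarrow> b_t X y \<delta> t0) F"
    unfolding b_t_def
    by (intro tendsto_diff tendsto_scaleR tendsto_ewprod a beta tau tendsto_const)
  have c: "((\<lambda>s. c_t X y \<delta> (\<tau> s)) \<longlongrightarrow> c_t X y \<delta> t0) F"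
    unfolding c_t_def
    by (intro tendsto_matrix_inv_mult L inv tendsto_ewprod a tau)
  have d: "((\<lambda>s. d_t X y \<delta> (\<tau> s)) \<longlongrightarrow> d_t X y \<delta> t0) F"
    unfolding d_t_def
    by (intro tendsto_matrix_vector_mult tendsto_ewprod c tau tendsto_const)
  show ?thesis
    unfolding zeta_t_def
    by (intro tendsto_diff tendsto_scaleR tendsto_ewprod tendsto_const a b beta c d)
qed

lemma Lmat_row_if_zero:
  fixes X :: "real^'p^'n"
  assumes "t$j = 0"
  shows "Lmat X \<delta> t $ j = (\<delta> / real CARD('n)) *s axis j 1"
proof -
  have "(transpose (Xt X t) ** Xt X t) $ j = 0"
    by (simp add: vec_eq_iff matrix_matrix_mult_def transpose_def Xt_nth assms)
  moreover have "(Tmat t ** Tmat t) $ j = 0"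
    using assms by (auto simp: vec_eq_iff matrix_matrix_mult_def Tmat_def intro!: sum.neutral)
  ultimately show ?thesis
    by (simp add: Lmat_def vec_eq_iff mat_def axis_def)
qed

lemma zeta_t_nth_eq_0:
  fixes X :: "real^'p^'n"
  assumes "t$j = 0" "\<delta> > 0" "invertible (Lmat X \<delta> t)"
  shows "zeta_t X y \<delta> t $ j = 0"
proof -
  have "\<delta> / real CARD('n) \<noteq> 0"
    using assms(2) by simp
  note row_j = matrix_inv_mult_nth_of_row_axis[OF assms(3) Lmat_row_if_zero[OF assms(1)] this]
  have "beta_t X y \<delta> t $ j = 0"
    unfolding beta_t_def row_j by (simp add: matrix_vector_mult_def transpose_def Xt_nth assms(1))
  moreover have "c_t X y \<delta> t $ j = 0"
    unfolding c_t_def row_j by (simp add: ewprod_def assms(1))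
  ultimately show ?thesis
    by (simp add: zeta_t_def ewprod_def)
qed

theorem proposition1:
  fixes X :: "real^'p^'n" and y :: "real^'n" and \<delta> :: real
    and t :: "real^'p" and j :: 'p
  assumes "\<delta> > 0"
    and "\<forall>i. i \<noteq> j \<longrightarrow> 0 \<le> t$i \<and> t$i < 1"
  shows "((\<lambda>s. zeta_t X y \<delta> (\<chi> i. if i = j then s else t$i) $ j) \<longlongrightarrow> 0) (at_right 0)"
proof -
  define t0 :: "real^'p" where "t0 = (\<chi> i. if i = j then 0 else t$i)"
  have "((\<lambda>s. \<chi> i. if i = j then s else t$i) \<longlongrightarrow> t0) (at_right 0)"
    unfolding t0_def by (intro vec_tendstoI) auto
  moreover have inv: "invertible (Lmat X \<delta> t0)"
    using assms by (intro invertible_Lmat) (auto simp: t0_def)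
  ultimately have "((\<lambda>s. zeta_t X y \<delta> (\<chi> i. if i = j then s else t$i) $ j) \<longlongrightarrow>
      zeta_t X y \<delta> t0 $ j) (at_right 0)"
    by (intro tendsto_vec_nth tendsto_zeta_t)
  moreover have "zeta_t X y \<delta> t0 $ j = 0"
    using assms(1) inv by (intro zeta_t_nth_eq_0) (auto simp: t0_def)
  ultimately show ?thesis
    by simp
qed

end
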